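(* (i) The collection $\mathrm{Prim}\,Mag=(\mathrm{Prim}\,Mag(n))_{n\ge1}$ is a suboperad of the operad $Mag$: it contains the identity operation and is closed under operadic composition, so that the composition $Mag\circ Mag\to Mag$ restricts to $\mathrm{Prim}\,Mag\circ\mathrm{Prim}\,Mag\to\mathrm{Prim}\,Mag$. (ii) For every $As^c$-$Mag$-bialgebra $\mathcal H$, every $p\in\mathrm{Prim}\,Mag(n)$ and all $x_1,\dots,x_n\in\mathrm{Prim}\,\mathcal H$, the element $p(x_1,\dots,x_n)$ computed with the product of $\mathcal H$ lies in $\mathrm{Prim}\,\mathcal H$; thus $\mathrm{Prim}\,\mathcal H$ is an algebra over $\mathrm{Prim}\,Mag$.
   Context: Let $\mathbb K$ be a field. An $As^c$-$Mag$-bialgebra is a vector space $\mathcal H$ with a bilinear product $\cdot$ (not assumed associative) with two-sided unit $1$ and a coassociative counital coproduct $\Delta$ with $\Delta(1)=1\otimes1$ and $\Delta(x\cdot y)=\Delta(x)\cdot(1\otimes y)+(x\otimes1)\cdot\Delta(y)-x\otimes y$, the product on $\mathcal H\otimes\mathcal H$ being componentwise; $\mathrm{Prim}\,\mathcal H$ is the set of $x$ in the kernel of the counit with $\Delta(x)=x\otimes1+1\otimes x$. $Mag$ is the operad of unital magmatic algebras: $Mag(n)=\mathbb K[Y_{n-1}]\otimes\mathbb K[S_n]$, $Y_{n-1}$ the set of planar binary rooted trees with $n$ leaves, an element $(t,\sigma)$ acting on a magmatic algebra by evaluating the bracketing $t$ on $(x_{\sigma^{-1}(1)},\dots,x_{\sigma^{-1}(n)})$.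 The free magmatic algebra $Mag(V)$ on a vector space $V$ carries the unique coproduct $\Delta$ with $\Delta(1)=1\otimes1$, $\Delta(v)=v\otimes1+1\otimes v$ ($v\in V$) satisfying the relation above, making it an $As^c$-$Mag$-bialgebra. $\mathrm{Prim}\,Mag(n)\subset Mag(n)$ is the subspace of operations $p$ such that $p(x_1,\dots,x_n)$ is primitive in $Mag(\mathbb Kx_1\oplus\dots\oplus\mathbb Kx_n)$. *)

theory Defs
  imports "HOL-Library.Poly_Mapping" "HOL-Combinatorics.Permutations"
begin

text \<open>A vector space over a field 'k with basis 'b is modelled as the space of
finitely supported functions 'b =>0 'k; the tensor product of two such spaces is
the space over the product basis.\<close>

definition sc :: "'k::field \<Rightarrow> ('b \<Rightarrow>\<^sub>0 'k) \<Rightarrow> ('b \<Rightarrow>\<^sub>0 'k)" where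
  "sc c x = Poly_Mapping.map (\<lambda>a. c * a) x"

definition bv :: "'b \<Rightarrow> ('b \<Rightarrow>\<^sub>0 'k::field)" where
  "bv b = Poly_Mapping.single b 1"

definition lin_ext :: "('b \<Rightarrow> ('c \<Rightarrow>\<^sub>0 'k::field)) \<Rightarrow> ('b \<Rightarrow>\<^sub>0 'k) \<Rightarrow> ('c \<Rightarrow>\<^sub>0 'k)" where
  "lin_ext f x = (\<Sum>b\<in>Poly_Mapping.keys x. sc (Poly_Mapping.lookup x b) (f b))"

definition tensor :: "('b \<Rightarrow>\<^sub>0 'k::field) \<Rightarrow> ('c \<Rightarrow>\<^sub>0 'k) \<Rightarrow> ('b \<times> 'c \<Rightarrow>\<^sub>0 'k)" where
  "tensor x y = (\<Sum>a\<in>Poly_Mapping.keys x. \<Sum>b\<in>Poly_Mapping.keys y. Poly_Mapping.single (a, b) (Poly_Mapping.lookup x a * Poly_Mapping.lookup y b))"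

definition tmul :: "(('b \<Rightarrow>\<^sub>0 'k::field) \<Rightarrow> ('b \<Rightarrow>\<^sub>0 'k) \<Rightarrow> ('b \<Rightarrow>\<^sub>0 'k))
    \<Rightarrow> ('b \<times> 'b \<Rightarrow>\<^sub>0 'k) \<Rightarrow> ('b \<times> 'b \<Rightarrow>\<^sub>0 'k) \<Rightarrow> ('b \<times> 'b \<Rightarrow>\<^sub>0 'k)" where
  "tmul mu T S = (\<Sum>ab\<in>Poly_Mapping.keys T. \<Sum>cd\<in>Poly_Mapping.keys S.
      sc (Poly_Mapping.lookup T ab * Poly_Mapping.lookup S cd)
         (tensor (mu (bv (fst ab)) (bv (fst cd))) (mu (bv (snd ab)) (bv (snd cd)))))"

definition is_linear :: "(('b \<Rightarrow>\<^sub>0 'k::field) \<Rightarrow> ('c \<Rightarrow>\<^sub>0 'k)) \<Rightarrow> bool" where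
  "is_linear f \<longleftrightarrow> (\<forall>x y. f (x + y) = f x + f y) \<and> (\<forall>c x. f (sc c x) = sc c (f x))"

definition is_linear_form :: "(('b \<Rightarrow>\<^sub>0 'k::field) \<Rightarrow> 'k) \<Rightarrow> bool" where
  "is_linear_form f \<longleftrightarrow> (\<forall>x y. f (x + y) = f x + f y) \<and> (\<forall>c x. f (sc c x) = c * f x)"

definition is_bilinear :: "(('b \<Rightarrow>\<^sub>0 'k::field) \<Rightarrow> ('b \<Rightarrow>\<^sub>0 'k) \<Rightarrow> ('b \<Rightarrow>\<^sub>0 'k)) \<Rightarrow> bool" where
  "is_bilinear m \<longleftrightarrow> (\<forall>x. is_linear (m x)) \<and> (\<forall>y. is_linear (\<lambda>x. m x y))"

text \<open>Coassociativity: (Delta (x) id) o Delta = (id (x) Delta) o Delta, after the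
canonical identification (H (x) H) (x) H = H (x) (H (x) H).\<close>
definition coassoc :: "(('b \<Rightarrow>\<^sub>0 'k::field) \<Rightarrow> ('b \<times> 'b \<Rightarrow>\<^sub>0 'k)) \<Rightarrow> bool" where
  "coassoc D \<longleftrightarrow> (\<forall>x.
     lin_ext (\<lambda>ab. lin_ext (\<lambda>((a1, a2), b). bv (a1, a2, b)) (tensor (D (bv (fst ab))) (bv (snd ab)))) (D x)
   = lin_ext (\<lambda>ab. tensor (bv (fst ab)) (D (bv (snd ab)))) (D x))"

definition counital :: "(('b \<Rightarrow>\<^sub>0 'k::field) \<Rightarrow> ('b \<times> 'b \<Rightarrow>\<^sub>0 'k)) \<Rightarrow> (('b \<Rightarrow>\<^sub>0 'k) \<Rightarrow> 'k) \<Rightarrow> bool" where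
  "counital D e \<longleftrightarrow> (\<forall>x.
     lin_ext (\<lambda>ab. sc (e (bv (fst ab))) (bv (snd ab))) (D x) = x \<and>
     lin_ext (\<lambda>ab. sc (e (bv (snd ab))) (bv (fst ab))) (D x) = x)"

definition asc_mag_bialgebra ::
  "(('b \<Rightarrow>\<^sub>0 'k::field) \<Rightarrow> ('b \<Rightarrow>\<^sub>0 'k) \<Rightarrow> ('b \<Rightarrow>\<^sub>0 'k)) \<Rightarrow> ('b \<Rightarrow>\<^sub>0 'k)
   \<Rightarrow> (('b \<Rightarrow>\<^sub>0 'k) \<Rightarrow> ('b \<times> 'b \<Rightarrow>\<^sub>0 'k)) \<Rightarrow> (('b \<Rightarrow>\<^sub>0 'k) \<Rightarrow> 'k) \<Rightarrow> bool" where
  "asc_mag_bialgebra mu one D e \<longleftrightarrow>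
     is_bilinear mu \<and> (\<forall>x. mu one x = x \<and> mu x one = x) \<and>
     is_linear D \<and> is_linear_form e \<and> coassoc D \<and> counital D e \<and>
     D one = tensor one one \<and>
     (\<forall>x y. D (mu x y) = tmul mu (D x) (tensor one y) + tmul mu (tensor x one) (D y) - tensor x y)"

definition is_prim :: "(('b \<Rightarrow>\<^sub>0 'k::field) \<Rightarrow> ('b \<times> 'b \<Rightarrow>\<^sub>0 'k)) \<Rightarrow> (('b \<Rightarrow>\<^sub>0 'k) \<Rightarrow> 'k)
   \<Rightarrow> ('b \<Rightarrow>\<^sub>0 'k) \<Rightarrow> ('b \<Rightarrow>\<^sub>0 'k) \<Rightarrow> bool" where
  "is_prim D e one x \<longleftrightarrow> e x = 0 \<and> D x = tensor x one + tensor one x"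

text \<open>Basis of Mag(V) for V with basis 'a: the unit (None) and the nonassociative
monomials (bracketed words) in the letters 'a.\<close>
datatype 'a bt = L 'a | N "'a bt" "'a bt"

fun bmul :: "'a bt option \<Rightarrow> 'a bt option \<Rightarrow> 'a bt option" where
  "bmul None y = y"
| "bmul (Some u) None = Some u"
| "bmul (Some u) (Some v) = Some (N u v)"

definition fmul :: "('a bt option \<Rightarrow>\<^sub>0 'k::field) \<Rightarrow> ('a bt option \<Rightarrow>\<^sub>0 'k) \<Rightarrow> ('a bt option \<Rightarrow>\<^sub>0 'k)" where
  "fmul x y = (\<Sum>a\<in>Poly_Mapping.keys x. \<Sum>b\<in>Poly_Mapping.keys y. Poly_Mapping.single (bmul a b) (Poly_Mapping.lookup x a * Poly_Mapping.lookup y b))"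

definition fone :: "('a bt option \<Rightarrow>\<^sub>0 'k::field)" where
  "fone = bv None"

definition fgen :: "'a \<Rightarrow> ('a bt option \<Rightarrow>\<^sub>0 'k::field)" where
  "fgen a = bv (Some (L a))"

fun fcop_bt :: "'a bt \<Rightarrow> ('a bt option \<times> 'a bt option \<Rightarrow>\<^sub>0 'k::field)" where
  "fcop_bt (L a) = tensor (bv (Some (L a))) fone + tensor fone (bv (Some (L a)))"
| "fcop_bt (N u v) =
     tmul fmul (fcop_bt u) (tensor fone (bv (Some v)))
   + tmul fmul (tensor (bv (Some u)) fone) (fcop_bt v)
   - tensor (bv (Some u)) (bv (Some v))"

definition fcop :: "('a bt option \<Rightarrow>\<^sub>0 'k::field) \<Rightarrow> ('a bt option \<times> 'a bt option \<Rightarrow>\<^sub>0 'k)" where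
  "fcop = lin_ext (\<lambda>w. case w of None \<Rightarrow> tensor fone fone | Some u \<Rightarrow> fcop_bt u)"

definition fcounit :: "('a bt option \<Rightarrow>\<^sub>0 'k::field) \<Rightarrow> 'k" where
  "fcounit x = Poly_Mapping.lookup x None"

text \<open>Planar binary rooted trees; Y_{n-1} = trees with n leaves.\<close>
datatype tree = Leaf | Node tree tree

fun nleaves :: "tree \<Rightarrow> nat" where
  "nleaves Leaf = 1"
| "nleaves (Node l r) = nleaves l + nleaves r"

fun eval_tree :: "('v \<Rightarrow> 'v \<Rightarrow> 'v) \<Rightarrow> tree \<Rightarrow> 'v list \<Rightarrow> 'v" where
  "eval_tree m Leaf xs = hd xs"
| "eval_tree m (Node l r) xs =
     m (eval_tree m l (take (nleaves l) xs)) (eval_tree m r (drop (nleaves l) xs))"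

definition mag_basis :: "nat \<Rightarrow> (tree \<times> (nat \<Rightarrow> nat)) set" where
  "mag_basis n = {(t, \<sigma>). nleaves t = n \<and> \<sigma> permutes {1..n}}"

text \<open>Mag(n) = K[Y_{n-1}] (x) K[S_n], with basis the pairs (t, sigma).\<close>
definition Mag :: "nat \<Rightarrow> ((tree \<times> (nat \<Rightarrow> nat)) \<Rightarrow>\<^sub>0 'k::field) set" where
  "Mag n = {p. Poly_Mapping.keys p \<subseteq> mag_basis n}"

definition op_eval :: "(('b \<Rightarrow>\<^sub>0 'k::field) \<Rightarrow> ('b \<Rightarrow>\<^sub>0 'k) \<Rightarrow> ('b \<Rightarrow>\<^sub>0 'k))
    \<Rightarrow> ((tree \<times> (nat \<Rightarrow> nat)) \<Rightarrow>\<^sub>0 'k) \<Rightarrow> (nat \<Rightarrow> ('b \<Rightarrow>\<^sub>0 'k)) \<Rightarrow> ('b \<Rightarrow>\<^sub>0 'k)" where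
  "op_eval m p x = (\<Sum>ts\<in>Poly_Mapping.keys p. sc (Poly_Mapping.lookup p ts)
      (eval_tree m (fst ts) (map (\<lambda>j. x (inv (snd ts) j)) [1..<nleaves (fst ts) + 1])))"

definition PrimMag :: "nat \<Rightarrow> ((tree \<times> (nat \<Rightarrow> nat)) \<Rightarrow>\<^sub>0 'k::field) set" where
  "PrimMag n = {p \<in> Mag n. is_prim fcop fcounit fone (op_eval fmul p (\<lambda>i. fgen i))}"

definition mag_id :: "(tree \<times> (nat \<Rightarrow> nat)) \<Rightarrow>\<^sub>0 'k::field" where
  "mag_id = bv (Leaf, id)"

text \<open>Reading a multilinear monomial back as a basis element (t, sigma) of Mag(M):
t is its bracketing and the letters, read left to right, are
sigma^-1(1), ..., sigma^-1(M).\<close>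
fun leaves :: "'a bt \<Rightarrow> 'a list" where
  "leaves (L a) = [a]"
| "leaves (N u v) = leaves u @ leaves v"

fun shape :: "'a bt \<Rightarrow> tree" where
  "shape (L a) = Leaf"
| "shape (N u v) = Node (shape u) (shape v)"

definition op_of_word :: "nat bt \<Rightarrow> tree \<times> (nat \<Rightarrow> nat)" where
  "op_of_word w = (shape w,
     inv (\<lambda>j. if j \<in> {1..length (leaves w)} then leaves w ! (j - 1) else j))"

definition to_op :: "(nat bt option \<Rightarrow>\<^sub>0 'k::field) \<Rightarrow> ((tree \<times> (nat \<Rightarrow> nat)) \<Rightarrow>\<^sub>0 'k)" where
  "to_op f = (\<Sum>w\<in>Poly_Mapping.keys f. case w of None \<Rightarrow> 0
                 | Some u \<Rightarrow> Poly_Mapping.single (op_of_word u) (Poly_Mapping.lookup f w))"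

text \<open>Operadic composition gamma(p; q_1, ..., q_n) for p in Mag(n), q_i in Mag(m_i):
the operation (x_1, ..., x_M) |-> p(q_1(x_1, ..., x_{m_1}), q_2(x_{m_1+1}, ...), ...),
M = m_1 + ... + m_n, computed in the free magmatic algebra and read back in Mag(M).\<close>
definition mag_comp :: "((tree \<times> (nat \<Rightarrow> nat)) \<Rightarrow>\<^sub>0 'k::field) \<Rightarrow> (nat \<Rightarrow> nat)
    \<Rightarrow> (nat \<Rightarrow> ((tree \<times> (nat \<Rightarrow> nat)) \<Rightarrow>\<^sub>0 'k)) \<Rightarrow> ((tree \<times> (nat \<Rightarrow> nat)) \<Rightarrow>\<^sub>0 'k)" where
  "mag_comp p m q = to_op (op_eval fmul p
      (\<lambda>i. op_eval fmul (q i) (\<lambda>j. fgen (sum m {1..<i} + j))))"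

end

theory Submission
  imports Defs "HOL-Library.Multiset"
begin

(* Evaluating the letters of the free magmatic algebra Mag(V) at elements x_i of an
   As^c-Mag-bialgebra H gives a unital magma morphism Mag(V) -> H. When the x_i are primitive it
   intertwines the two coproducts: both are determined on products by the same compatibility
   relation, and they agree on letters. Hence it maps the primitive element p(x_1, ..., x_n) of
   Mag(V) to p(x_1, ..., x_n) in H, where the counit vanishes by counitality; this is (ii).
   Inside Mag(V) itself the same argument shows that p evaluated at the q_i, each evaluated on its
   own block of consecutive letters, is primitive. That element is multilinear in the letters
   1, ..., M, so it is the evaluation of its own read-back in Mag(M), which gives (i). *)

lemma lookup_sc [simp]: "Poly_Mapping.lookup (sc c x) b = c * Poly_Mapping.lookup x b"
  by (simp add: sc_def map.rep_eq when_def)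

lemma sc_add [simp]: "sc c (x + y) = sc c x + sc c y"
  by (rule poly_mapping_eqI) (simp add: lookup_add algebra_simps)

lemma sc_add_left: "sc (a + b) x = sc a x + sc b x"
  by (rule poly_mapping_eqI) (simp add: lookup_add algebra_simps)

lemma sc_diff [simp]: "sc c (x - y) = sc c x - sc c y"
  by (rule poly_mapping_eqI) (simp add: lookup_minus algebra_simps)

lemma sc_0 [simp]: "sc c 0 = 0"
  by (rule poly_mapping_eqI) simp

lemma sc_0_left [simp]: "sc 0 x = 0"
  by (rule poly_mapping_eqI) simp

lemma sc_1 [simp]: "sc 1 x = x"
  by (rule poly_mapping_eqI) simp

lemma sc_sc [simp]: "sc a (sc b x) = sc (a * b) x"
  by (rule poly_mapping_eqI) simp

lemma sc_sum: "sc c (sum f A) = (\<Sum>a\<in>A. sc c (f a))"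
  by (rule poly_mapping_eqI) (simp add: lookup_sum sum_distrib_left)

lemma single_eq_sc_bv: "Poly_Mapping.single b c = sc c (bv b)"
  by (rule poly_mapping_eqI) (simp add: bv_def lookup_single when_def)

lemma bv_nonzero [simp]: "bv b \<noteq> (0 :: _ \<Rightarrow>\<^sub>0 'k::field)"
  by (metis bv_def lookup_single_eq lookup_zero one_neq_zero)

lemma sc_eq_0_imp:
  assumes "sc c v = 0" and "v \<noteq> 0"
  shows "c = 0"
  using assms by (metis lookup_sc lookup_zero mult_eq_0_iff poly_mapping_eqI)

lemma sc_eq_self_imp:
  assumes "sc c v = v" and "v \<noteq> 0"
  shows "c = 1"
  using assms by (metis lookup_sc mult_cancel_right2 poly_mapping_eqI lookup_zero)

lemma lin_ext_eq_sum_superset: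
  assumes "finite S" "Poly_Mapping.keys x \<subseteq> S"
  shows "lin_ext f x = (\<Sum>b\<in>S. sc (Poly_Mapping.lookup x b) (f b))"
  unfolding lin_ext_def
  by (rule sum.mono_neutral_left) (use assms in \<open>auto simp: in_keys_iff\<close>)

lemma lin_ext_add [simp]: "lin_ext f (x + y) = lin_ext f x + lin_ext f y"
proof -
  let ?S = "Poly_Mapping.keys x \<union> Poly_Mapping.keys y"
  have "lin_ext f (x + y) = (\<Sum>b\<in>?S. sc (Poly_Mapping.lookup (x + y) b) (f b))"
    by (rule lin_ext_eq_sum_superset) (auto dest: keys_add[THEN subsetD])
  also have "\<dots> = (\<Sum>b\<in>?S. sc (Poly_Mapping.lookup x b) (f b))
                 + (\<Sum>b\<in>?S. sc (Poly_Mapping.lookup y b) (f b))"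
    by (simp add: lookup_add sc_add_left sum.distrib)
  also have "\<dots> = lin_ext f x + lin_ext f y"
    by (subst (1 2) lin_ext_eq_sum_superset[of ?S]) auto
  finally show ?thesis .
qed

lemma lin_ext_sc [simp]: "lin_ext f (sc c x) = sc c (lin_ext f x)"
proof -
  have "lin_ext f (sc c x) = (\<Sum>b\<in>Poly_Mapping.keys x. sc (Poly_Mapping.lookup (sc c x) b) (f b))"
    by (rule lin_ext_eq_sum_superset) (auto simp: in_keys_iff)
  then show ?thesis by (simp add: lin_ext_def sc_sum)
qed

lemma lin_ext_bv [simp]: "lin_ext f (bv b) = f b"
  by (simp add: lin_ext_def bv_def)

lemma lin_ext_bv_id [simp]: "lin_ext bv x = x"
proof (rule poly_mapping_eqI)
  fix k
  have "Poly_Mapping.lookup (lin_ext bv x) k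
      = (\<Sum>b\<in>Poly_Mapping.keys x. Poly_Mapping.lookup x b * (if b = k then 1 else 0))"
    by (simp add: lin_ext_def lookup_sum bv_def lookup_single when_def)
  also have "\<dots> = (\<Sum>b\<in>Poly_Mapping.keys x. if b = k then Poly_Mapping.lookup x b else 0)"
    by (rule sum.cong) auto
  also have "\<dots> = Poly_Mapping.lookup x k"
    by (simp add: in_keys_iff)
  finally show "Poly_Mapping.lookup (lin_ext bv x) k = Poly_Mapping.lookup x k" .
qed

lemma lin_ext_cong:
  "(\<And>b. b \<in> Poly_Mapping.keys x \<Longrightarrow> f b = g b) \<Longrightarrow> lin_ext f x = lin_ext g x"
  by (simp add: lin_ext_def)

lemma lin_ext_add_fun: "lin_ext (\<lambda>b. f b + g b) x = lin_ext f x + lin_ext g x"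
  by (simp add: lin_ext_def sum.distrib)

lemma lin_ext_sc_fun: "lin_ext (\<lambda>b. sc c (f b)) x = sc c (lin_ext f x)"
  by (simp add: lin_ext_def sc_sum mult.commute)

lemma is_linear_lin_ext: "is_linear (lin_ext f)"
  by (simp add: is_linear_def)

lemma is_linear_0: "is_linear g \<Longrightarrow> g 0 = 0"
  unfolding is_linear_def by (metis add_cancel_right_right add_0)

lemma is_linear_sum: "is_linear g \<Longrightarrow> g (sum f A) = (\<Sum>a\<in>A. g (f a))"
  by (induction A rule: infinite_finite_induct) (auto simp: is_linear_0 is_linear_def)

lemma is_linear_diff: "is_linear g \<Longrightarrow> g (x - y) = g x - g y"
  unfolding is_linear_def by (metis add_diff_cancel diff_add_cancel)

lemma is_linear_eq_lin_ext:
  assumes "is_linear g"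
  shows "g x = lin_ext (\<lambda>b. g (bv b)) x"
proof -
  have "g x = g (lin_ext bv x)"
    by simp
  also have "\<dots> = lin_ext (\<lambda>b. g (bv b)) x"
    unfolding lin_ext_def using assms by (simp add: is_linear_sum is_linear_def)
  finally show ?thesis .
qed

lemma is_linear_eq_on_basis:
  assumes "is_linear f" "is_linear g" "\<And>b. f (bv b) = g (bv b)"
  shows "f x = g x"
proof -
  have "f x = lin_ext (\<lambda>b. f (bv b)) x"
    by (rule is_linear_eq_lin_ext[OF assms(1)])
  also have "\<dots> = g x"
    by (simp add: assms(3) is_linear_eq_lin_ext[OF assms(2), symmetric])
  finally show ?thesis .
qed

lemma is_linear_compose: "is_linear f \<Longrightarrow> is_linear g \<Longrightarrow> is_linear (\<lambda>x. f (g x))"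
  by (simp add: is_linear_def)

lemma is_linear_compose_add: "is_linear f \<Longrightarrow> is_linear g \<Longrightarrow> is_linear (\<lambda>x. f x + g x)"
  by (simp add: is_linear_def)

lemma is_linear_compose_sub: "is_linear f \<Longrightarrow> is_linear g \<Longrightarrow> is_linear (\<lambda>x. f x - g x)"
  by (simp add: is_linear_def)

lemma is_linear_id: "is_linear (\<lambda>x. x)"
  by (simp add: is_linear_def)

lemma lin_ext_lin_ext: "lin_ext f (lin_ext g x) = lin_ext (\<lambda>b. lin_ext f (g b)) x"
  by (simp add: lin_ext_def[of g] lin_ext_def[of "\<lambda>b. lin_ext f (g b)"]
                is_linear_sum[OF is_linear_lin_ext])

lemma keys_lin_ext_subset:
  "Poly_Mapping.keys (lin_ext g C) \<subseteq> (\<Union>w\<in>Poly_Mapping.keys C. Poly_Mapping.keys (g w))"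
proof
  fix k assume "k \<in> Poly_Mapping.keys (lin_ext g C)"
  then have "k \<in> (\<Union>w\<in>Poly_Mapping.keys C. Poly_Mapping.keys (sc (Poly_Mapping.lookup C w) (g w)))"
    unfolding lin_ext_def by (rule subsetD[OF keys_sum])
  then show "k \<in> (\<Union>w\<in>Poly_Mapping.keys C. Poly_Mapping.keys (g w))"
    by (auto simp: in_keys_iff)
qed

lemma is_bilinear_left: "is_bilinear mu \<Longrightarrow> is_linear (\<lambda>x. mu x y)"
  unfolding is_bilinear_def by blast

lemma is_bilinear_right: "is_bilinear mu \<Longrightarrow> is_linear (mu x)"
  unfolding is_bilinear_def by blast

lemma bilinear_eq_on_basis:
  assumes "\<And>x. is_linear (f x)" "\<And>y. is_linear (\<lambda>x. f x y)"
    and "\<And>x. is_linear (g x)" "\<And>y. is_linear (\<lambda>x. g x y)"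
    and "\<And>a b. f (bv a) (bv b) = g (bv a) (bv b)"
  shows "f x y = g x y"
proof -
  have "f (bv a) y = g (bv a) y" for a
    by (rule is_linear_eq_on_basis[OF assms(1,3)]) (simp add: assms(5))
  then show ?thesis
    by (rule is_linear_eq_on_basis[OF assms(2,4)])
qed

definition bilin_ext ::
    "('a \<Rightarrow> 'b \<Rightarrow> ('c \<Rightarrow>\<^sub>0 'k::field)) \<Rightarrow> ('a \<Rightarrow>\<^sub>0 'k) \<Rightarrow> ('b \<Rightarrow>\<^sub>0 'k) \<Rightarrow> ('c \<Rightarrow>\<^sub>0 'k)"
  where "bilin_ext g x y = lin_ext (\<lambda>a. lin_ext (g a) y) x"

lemma bilin_ext_bv [simp]: "bilin_ext g (bv a) (bv b) = g a b"
  by (simp add: bilin_ext_def)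

lemma is_linear_bilin_ext_left: "is_linear (\<lambda>x. bilin_ext g x y)"
  unfolding is_linear_def bilin_ext_def by simp

lemma is_linear_bilin_ext_right: "is_linear (bilin_ext g x)"
  unfolding is_linear_def bilin_ext_def by (simp add: lin_ext_add_fun lin_ext_sc_fun)

lemma sum_sum_single_eq_bilin_ext:
  "(\<Sum>a\<in>Poly_Mapping.keys x. \<Sum>b\<in>Poly_Mapping.keys y.
      Poly_Mapping.single (h a b) (Poly_Mapping.lookup x a * Poly_Mapping.lookup y b))
   = bilin_ext (\<lambda>a b. bv (h a b)) x y"
  by (simp add: bilin_ext_def lin_ext_def single_eq_sc_bv sc_sum mult.commute)

lemma tensor_eq_bilin_ext: "tensor = bilin_ext (\<lambda>a b. bv (a, b))"
  by (intro ext) (simp add: tensor_def sum_sum_single_eq_bilin_ext)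

lemma fmul_eq_bilin_ext: "fmul = bilin_ext (\<lambda>a b. bv (bmul a b))"
  by (intro ext) (simp add: fmul_def sum_sum_single_eq_bilin_ext)

lemma tmul_eq_bilin_ext:
  "tmul mu = bilin_ext (\<lambda>ab cd. tensor (mu (bv (fst ab)) (bv (fst cd))) (mu (bv (snd ab)) (bv (snd cd))))"
  by (intro ext) (simp add: tmul_def bilin_ext_def lin_ext_def sc_sum mult.commute)

lemma is_linear_tensor_left: "is_linear (\<lambda>x. tensor x y)"
  by (simp add: tensor_eq_bilin_ext is_linear_bilin_ext_left)

lemma is_linear_tensor_right: "is_linear (tensor x)"
  by (simp add: tensor_eq_bilin_ext is_linear_bilin_ext_right)

lemma is_linear_fmul_left: "is_linear (\<lambda>x. fmul x y)"
  by (simp add: fmul_eq_bilin_ext is_linear_bilin_ext_left)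

lemma is_linear_fmul_right: "is_linear (fmul x)"
  by (simp add: fmul_eq_bilin_ext is_linear_bilin_ext_right)

lemma is_bilinear_fmul: "is_bilinear fmul"
  by (simp add: is_bilinear_def is_linear_fmul_left is_linear_fmul_right)

lemma is_linear_tmul_left: "is_linear (\<lambda>x. tmul mu x y)"
  by (simp add: tmul_eq_bilin_ext is_linear_bilin_ext_left)

lemma is_linear_tmul_right: "is_linear (tmul mu x)"
  by (simp add: tmul_eq_bilin_ext is_linear_bilin_ext_right)

lemma tensor_bv [simp]: "tensor (bv a) (bv b) = bv (a, b)"
  by (simp add: tensor_eq_bilin_ext)

lemma fmul_bv [simp]: "fmul (bv a) (bv b) = bv (bmul a b)"
  by (simp add: fmul_eq_bilin_ext)

lemma tmul_bv:
  "tmul mu (bv ab) (bv cd) = tensor (mu (bv (fst ab)) (bv (fst cd))) (mu (bv (snd ab)) (bv (snd cd)))"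
  by (simp add: tmul_eq_bilin_ext)

lemma tmul_tensor_tensor:
  assumes mu: "is_bilinear mu"
  shows "tmul mu (tensor A B) (tensor C E) = tensor (mu A C) (mu B E)"
proof -
  have on_basis: "tmul mu (tensor (bv a) B) (tensor (bv c) E) = tensor (mu (bv a) (bv c)) (mu B E)" for a c
    by (rule bilinear_eq_on_basis[where f="\<lambda>B E. tmul mu (tensor (bv a) B) (tensor (bv c) E)"
                                 and g="\<lambda>B E. tensor (mu (bv a) (bv c)) (mu B E)"])
       (auto intro!: is_linear_compose[OF is_linear_tmul_right] is_linear_compose[OF is_linear_tensor_right]
          is_linear_compose[OF is_linear_tmul_left is_linear_tensor_right]
          is_linear_compose[OF is_linear_tensor_right is_bilinear_right[OF mu]]
          is_linear_compose[OF is_linear_tensor_right is_bilinear_left[OF mu]]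
          simp: tmul_bv is_linear_id)
  show ?thesis
    by (rule bilinear_eq_on_basis[where f="\<lambda>A C. tmul mu (tensor A B) (tensor C E)"
                                 and g="\<lambda>A C. tensor (mu A C) (mu B E)"])
       (auto intro!: is_linear_compose[OF is_linear_tmul_right is_linear_tensor_left]
          is_linear_compose[OF is_linear_tmul_left is_linear_tensor_left]
          is_linear_compose[OF is_linear_tensor_left is_bilinear_right[OF mu]]
          is_linear_compose[OF is_linear_tensor_left is_bilinear_left[OF mu]] simp: on_basis is_linear_id)
qed

lemma tmul_unit_left:
  assumes "is_bilinear mu" and "\<And>x. mu one x = x"
  shows "tmul mu (tensor one one) T = T"
  by (rule is_linear_eq_on_basis[OF is_linear_tmul_right is_linear_id])
     (metis tensor_bv prod.collapse tmul_tensor_tensor assms)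

lemma tmul_unit_right:
  assumes "is_bilinear mu" and "\<And>x. mu x one = x"
  shows "tmul mu T (tensor one one) = T"
  by (rule is_linear_eq_on_basis[OF is_linear_tmul_left is_linear_id])
     (metis tensor_bv prod.collapse tmul_tensor_tensor assms)

section \<open>Evaluating the free magmatic algebra\<close>

definition coprimitive ::
    "(('b \<Rightarrow>\<^sub>0 'k::field) \<Rightarrow> ('b \<times> 'b \<Rightarrow>\<^sub>0 'k)) \<Rightarrow> ('b \<Rightarrow>\<^sub>0 'k) \<Rightarrow> ('b \<Rightarrow>\<^sub>0 'k) \<Rightarrow> bool"
  where "coprimitive D one y \<longleftrightarrow> D y = tensor y one + tensor one y"

lemma is_prim_iff: "is_prim D e one y \<longleftrightarrow> e y = 0 \<and> coprimitive D one y"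
  by (simp add: is_prim_def coprimitive_def)

fun eval_word :: "('a \<Rightarrow> 'h) \<Rightarrow> ('h \<Rightarrow> 'h \<Rightarrow> 'h) \<Rightarrow> 'a bt \<Rightarrow> 'h" where
  "eval_word x mu (L a) = x a"
| "eval_word x mu (N u v) = mu (eval_word x mu u) (eval_word x mu v)"

lemma op_eval_eq_lin_ext:
  "op_eval m p x
   = lin_ext (\<lambda>ts. eval_tree m (fst ts) (map (\<lambda>j. x (inv (snd ts) j)) [1..<nleaves (fst ts) + 1])) p"
  by (simp add: op_eval_def lin_ext_def)

lemma op_eval_cong_Mag:
  assumes "p \<in> Mag n" and "\<And>i. i \<in> {1..n} \<Longrightarrow> x i = y i"
  shows "op_eval m p x = op_eval m p y"
  unfolding op_eval_def
proof (intro sum.cong refl arg_cong[where f="sc _"] arg_cong[where f="eval_tree m _"] map_cong)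
  fix ts j
  assume "ts \<in> Poly_Mapping.keys p" and "j \<in> set [1..<nleaves (fst ts) + 1]"
  then have "j \<in> {1..n}" and "inv (snd ts) permutes {1..n}"
    using assms(1) by (auto simp: Mag_def mag_basis_def permutes_inv)
  then show "x (inv (snd ts) j) = y (inv (snd ts) j)"
    by (metis assms(2) permutes_in_image)
qed

locale compatible_coproduct =
  fixes mu :: "('b \<Rightarrow>\<^sub>0 'k::field) \<Rightarrow> ('b \<Rightarrow>\<^sub>0 'k) \<Rightarrow> ('b \<Rightarrow>\<^sub>0 'k)"
    and one :: "'b \<Rightarrow>\<^sub>0 'k"
    and D :: "('b \<Rightarrow>\<^sub>0 'k) \<Rightarrow> ('b \<times> 'b \<Rightarrow>\<^sub>0 'k)"
  assumes bilinear: "is_bilinear mu"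
    and unit_left: "\<And>x. mu one x = x" and unit_right: "\<And>x. mu x one = x"
    and linear_coproduct: "is_linear D"
    and coproduct_one: "D one = tensor one one"
    and coproduct_mult: "\<And>x y. D (mu x y)
          = tmul mu (D x) (tensor one y) + tmul mu (tensor x one) (D y) - tensor x y"
begin

context
  fixes x :: "'a \<Rightarrow> ('b \<Rightarrow>\<^sub>0 'k)"
begin

definition eval_monomial :: "'a bt option \<Rightarrow> ('b \<Rightarrow>\<^sub>0 'k)"
  where "eval_monomial w = (case w of None \<Rightarrow> one | Some u \<Rightarrow> eval_word x mu u)"

definition eval_hom :: "('a bt option \<Rightarrow>\<^sub>0 'k) \<Rightarrow> ('b \<Rightarrow>\<^sub>0 'k)"
  where "eval_hom = lin_ext eval_monomial"

definition eval_hom_tensor :: "('a bt option \<times> 'a bt option \<Rightarrow>\<^sub>0 'k) \<Rightarrow> ('b \<times> 'b \<Rightarrow>\<^sub>0 'k)"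
  where "eval_hom_tensor = lin_ext (\<lambda>ab. tensor (eval_monomial (fst ab)) (eval_monomial (snd ab)))"

lemma eval_monomial_bmul: "eval_monomial (bmul a b) = mu (eval_monomial a) (eval_monomial b)"
  by (cases a; cases b) (simp_all add: eval_monomial_def unit_left unit_right)

lemma eval_hom_bv [simp]: "eval_hom (bv a) = eval_monomial a"
  by (simp add: eval_hom_def)

lemma eval_hom_tensor_bv [simp]:
  "eval_hom_tensor (bv ab) = tensor (eval_monomial (fst ab)) (eval_monomial (snd ab))"
  by (simp add: eval_hom_tensor_def)

lemma eval_hom_fone [simp]: "eval_hom fone = one"
  by (simp add: fone_def eval_monomial_def)

lemma is_linear_eval_hom: "is_linear eval_hom"
  by (simp add: eval_hom_def is_linear_lin_ext)

lemma is_linear_eval_hom_tensor: "is_linear eval_hom_tensor"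
  by (simp add: eval_hom_tensor_def is_linear_lin_ext)

lemma eval_hom_fmul: "eval_hom (fmul X Y) = mu (eval_hom X) (eval_hom Y)"
  by (rule bilinear_eq_on_basis[where f="\<lambda>X Y. eval_hom (fmul X Y)"
                                  and g="\<lambda>X Y. mu (eval_hom X) (eval_hom Y)"])
     (auto intro!: is_linear_compose[OF is_linear_eval_hom is_linear_fmul_left]
        is_linear_compose[OF is_linear_eval_hom is_linear_fmul_right]
        is_linear_compose[OF is_bilinear_right[OF bilinear] is_linear_eval_hom]
        is_linear_compose[OF is_bilinear_left[OF bilinear] is_linear_eval_hom]
        simp: eval_monomial_bmul)

lemma eval_hom_tensor_tensor: "eval_hom_tensor (tensor X Y) = tensor (eval_hom X) (eval_hom Y)"
  by (rule bilinear_eq_on_basis[where f="\<lambda>X Y. eval_hom_tensor (tensor X Y)"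
                                  and g="\<lambda>X Y. tensor (eval_hom X) (eval_hom Y)"])
     (auto intro!: is_linear_compose[OF is_linear_eval_hom_tensor is_linear_tensor_left]
        is_linear_compose[OF is_linear_eval_hom_tensor is_linear_tensor_right]
        is_linear_compose[OF is_linear_tensor_right is_linear_eval_hom]
        is_linear_compose[OF is_linear_tensor_left is_linear_eval_hom])

lemma eval_hom_tensor_tmul:
  "eval_hom_tensor (tmul fmul T S) = tmul mu (eval_hom_tensor T) (eval_hom_tensor S)"
  by (rule bilinear_eq_on_basis[where f="\<lambda>T S. eval_hom_tensor (tmul fmul T S)"
                                  and g="\<lambda>T S. tmul mu (eval_hom_tensor T) (eval_hom_tensor S)"])
     (auto intro!: is_linear_compose[OF is_linear_eval_hom_tensor is_linear_tmul_left]
        is_linear_compose[OF is_linear_eval_hom_tensor is_linear_tmul_right]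
        is_linear_compose[OF is_linear_tmul_right is_linear_eval_hom_tensor]
        is_linear_compose[OF is_linear_tmul_left is_linear_eval_hom_tensor]
        simp: tmul_bv eval_hom_tensor_tensor tmul_tensor_tensor[OF bilinear] eval_monomial_bmul)

lemma coproduct_eval_word:
  assumes "\<And>a. coprimitive D one (x a)"
  shows "D (eval_word x mu u) = eval_hom_tensor (fcop_bt u)"
proof (induction u)
  case (L a)
  then show ?case
    using assms[of a, unfolded coprimitive_def] is_linear_eval_hom_tensor
    by (simp add: eval_hom_tensor_tensor is_linear_def eval_monomial_def)
next
  case (N u v)
  then show ?case
    unfolding eval_word.simps coproduct_mult fcop_bt.simps is_linear_diff[OF is_linear_eval_hom_tensor]
    using is_linear_eval_hom_tensor
    by (simp add: is_linear_def eval_hom_tensor_tmul eval_hom_tensor_tensor eval_monomial_def)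
qed

lemma coproduct_eval_hom:
  assumes "\<And>a. coprimitive D one (x a)"
  shows "D (eval_hom X) = eval_hom_tensor (fcop X)"
proof (rule is_linear_eq_on_basis[where f="\<lambda>X. D (eval_hom X)" and g="\<lambda>X. eval_hom_tensor (fcop X)"])
  fix w :: "'a bt option"
  show "D (eval_hom (bv w)) = eval_hom_tensor (fcop (bv w))"
    by (cases w) (simp_all add: fcop_def coproduct_one fone_def eval_monomial_def coproduct_eval_word[OF assms])
qed (simp_all add: fcop_def is_linear_compose[OF linear_coproduct is_linear_eval_hom]
       is_linear_compose[OF is_linear_eval_hom_tensor is_linear_lin_ext])

end

lemma eval_hom_eval_tree:
  "length xs \<ge> nleaves t \<Longrightarrow> eval_hom x (eval_tree fmul t xs) = eval_tree mu t (map (eval_hom x) xs)"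
proof (induction t arbitrary: xs)
  case Leaf
  then show ?case by (cases xs) auto
next
  case (Node l r)
  then show ?case by (simp add: eval_hom_fmul take_map drop_map)
qed

lemma eval_hom_op_eval: "eval_hom x (op_eval fmul p X) = op_eval mu p (\<lambda>i. eval_hom x (X i))"
  using is_linear_eval_hom[of x]
  by (simp add: op_eval_def is_linear_sum is_linear_def eval_hom_eval_tree o_def)

theorem coprimitive_op_eval:
  assumes "p \<in> Mag n" and "coprimitive fcop fone (op_eval fmul p fgen)"
    and "\<And>i. i \<in> {1..n} \<Longrightarrow> coprimitive D one (x i)"
  shows "coprimitive D one (op_eval mu p x)"
proof -
  \<comment> \<open>Letters outside \<open>{1..n}\<close> do not occur in \<open>p\<close>; sending them to 0 keeps all letters
    primitive.\<close>
  define x' where "x' i = (if i \<in> {1..n} then x i else 0)" for i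
  have "coprimitive D one (x' i)" for i
    using assms(3)
    by (simp add: x'_def coprimitive_def is_linear_0[OF linear_coproduct]
        is_linear_0[OF is_linear_tensor_left] is_linear_0[OF is_linear_tensor_right])
  moreover have "op_eval mu p x = op_eval mu p x'"
    by (rule op_eval_cong_Mag[OF assms(1)]) (simp add: x'_def)
  then have "op_eval mu p x = eval_hom x' (op_eval fmul p fgen)"
    by (simp add: eval_hom_op_eval fgen_def eval_monomial_def)
  ultimately show ?thesis
    using assms(2) is_linear_eval_hom_tensor[of x']
    by (simp add: coprimitive_def coproduct_eval_hom is_linear_def eval_hom_tensor_tensor)
qed

end

lemma fmul_fone_left: "fmul fone x = x"
  by (rule is_linear_eq_on_basis[OF is_linear_fmul_right is_linear_id]) (simp add: fone_def)

lemma fmul_fone_right: "fmul x fone = x"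
proof (rule is_linear_eq_on_basis[OF is_linear_fmul_left is_linear_id])
  show "fmul (bv w) fone = bv w" for w :: "'a bt option"
    by (cases w) (simp_all add: fone_def)
qed

lemma is_linear_fcop: "is_linear fcop"
  by (simp add: fcop_def is_linear_lin_ext)

lemma fcop_bv_Some [simp]: "fcop (bv (Some u)) = fcop_bt u"
  by (simp add: fcop_def)

lemma fcop_fone [simp]: "fcop fone = tensor fone fone"
  by (simp add: fcop_def fone_def)

lemma coprimitive_fgen: "coprimitive fcop fone (fgen a)"
  by (simp add: coprimitive_def fgen_def)

lemma fcop_fmul_bv:
  "fcop (fmul (bv a) (bv b))
   = tmul fmul (fcop (bv a)) (tensor fone (bv b)) + tmul fmul (tensor (bv a) fone) (fcop (bv b))
     - tensor (bv a) (bv b)"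
proof (cases a; cases b)
  assume "a = None" "b = None"
  then show ?thesis
    by (simp flip: fone_def add: fmul_fone_left tmul_unit_left[OF is_bilinear_fmul fmul_fone_left])
next
  fix v assume "a = None" "b = Some v"
  then show ?thesis
    by (simp flip: fone_def add: fmul_fone_left tmul_unit_left[OF is_bilinear_fmul fmul_fone_left]
                                 tmul_tensor_tensor[OF is_bilinear_fmul])
next
  fix u assume "a = Some u" "b = None"
  then show ?thesis
    by (simp flip: fone_def add: fmul_fone_right tmul_unit_right[OF is_bilinear_fmul fmul_fone_right]
                                 tmul_tensor_tensor[OF is_bilinear_fmul])
qed simp

lemma fcop_fmul:
  "fcop (fmul X Y) = tmul fmul (fcop X) (tensor fone Y) + tmul fmul (tensor X fone) (fcop Y) - tensor X Y"
proof (rule bilinear_eq_on_basis[where f="\<lambda>X Y. fcop (fmul X Y)" and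
      g="\<lambda>X Y. tmul fmul (fcop X) (tensor fone Y) + tmul fmul (tensor X fone) (fcop Y) - tensor X Y"])
  show "fcop (fmul (bv a) (bv b))
      = tmul fmul (fcop (bv a)) (tensor fone (bv b)) + tmul fmul (tensor (bv a) fone) (fcop (bv b))
        - tensor (bv a) (bv b)" for a b
    by (rule fcop_fmul_bv)
qed (auto intro!: is_linear_compose_sub is_linear_compose_add is_linear_tensor_left is_linear_tensor_right
       is_linear_compose[OF is_linear_fcop is_linear_fmul_left]
       is_linear_compose[OF is_linear_fcop is_linear_fmul_right]
       is_linear_compose[OF is_linear_tmul_left is_linear_fcop]
       is_linear_compose[OF is_linear_tmul_left is_linear_tensor_left]
       is_linear_compose[OF is_linear_tmul_right is_linear_fcop]
       is_linear_compose[OF is_linear_tmul_right is_linear_tensor_right])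

interpretation free: compatible_coproduct fmul fone fcop
  by unfold_locales
     (simp_all add: is_bilinear_fmul fmul_fone_left fmul_fone_right is_linear_fcop fcop_fmul)

section \<open>Multilinear elements of the free magmatic algebra\<close>

definition multihomogeneous :: "'a multiset \<Rightarrow> ('a bt option \<Rightarrow>\<^sub>0 'k::field) \<Rightarrow> bool"
  where "multihomogeneous A X
    \<longleftrightarrow> (\<forall>w\<in>Poly_Mapping.keys X. \<exists>u. w = Some u \<and> mset (leaves u) = A)"

lemma multihomogeneous_sc: "multihomogeneous A X \<Longrightarrow> multihomogeneous A (sc c X)"
  unfolding multihomogeneous_def by (auto simp: in_keys_iff)

lemma multihomogeneous_sum:
  "(\<And>i. i \<in> I \<Longrightarrow> multihomogeneous A (f i)) \<Longrightarrow> multihomogeneous A (sum f I)"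
  unfolding multihomogeneous_def using keys_sum[of f I] by blast

lemma multihomogeneous_bv: "mset (leaves u) = A \<Longrightarrow> multihomogeneous A (bv (Some u))"
  by (simp add: multihomogeneous_def bv_def)

lemma multihomogeneous_fgen: "multihomogeneous {#a#} (fgen a)"
  by (simp add: fgen_def multihomogeneous_bv)

lemma multihomogeneous_fmul:
  assumes "multihomogeneous A X" "multihomogeneous B Y"
  shows "multihomogeneous (A + B) (fmul X Y)"
  unfolding fmul_def single_eq_sc_bv
proof (intro multihomogeneous_sum multihomogeneous_sc)
  fix a b assume "a \<in> Poly_Mapping.keys X" "b \<in> Poly_Mapping.keys Y"
  then obtain u v where "a = Some u" "mset (leaves u) = A" "b = Some v" "mset (leaves v) = B"
    using assms unfolding multihomogeneous_def by blast
  then show "multihomogeneous (A + B) (bv (bmul a b))"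
    by (simp add: multihomogeneous_bv)
qed

lemma multihomogeneous_eval_tree:
  assumes "length xs = nleaves t" and "list_all2 multihomogeneous As xs"
  shows "multihomogeneous (sum_list As) (eval_tree fmul t xs)"
  using assms
proof (induction t arbitrary: xs As)
  case Leaf
  then obtain x A where "xs = [x]" and "As = [A]"
    by (metis One_nat_def length_0_conv length_Suc_conv list_all2_lengthD nleaves.simps(1))
  then show ?case
    using Leaf.prems by simp
next
  case (Node l r)
  let ?k = "nleaves l"
  have "multihomogeneous (sum_list (take ?k As) + sum_list (drop ?k As))
          (fmul (eval_tree fmul l (take ?k xs)) (eval_tree fmul r (drop ?k xs)))"
    by (intro multihomogeneous_fmul Node.IH) (use Node.prems in simp_all)
  then show ?case
    by (simp flip: sum_list_append)
qed

lemma sum_list_map_permutes: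
  assumes "g permutes {1..n}"
  shows "sum_list (map (\<lambda>j. A (g j)) [1..<n + 1]) = sum A {1..n}"
proof -
  have "sum_list (map (\<lambda>j. A (g j)) [1..<n + 1]) = sum (A \<circ> g) {1..<n + 1}"
    by (simp only: sum_set_upt_conv_sum_list_nat[symmetric] set_upt comp_def)
  also have "\<dots> = sum (A \<circ> g) {1..n}"
    by (simp add: atLeastLessThanSuc_atLeastAtMost)
  also have "\<dots> = sum A {1..n}"
    by (rule sum.permute[OF assms, symmetric])
  finally show ?thesis .
qed

lemma multihomogeneous_op_eval:
  assumes "p \<in> Mag n" and "\<And>i. i \<in> {1..n} \<Longrightarrow> multihomogeneous (A i) (X i)"
  shows "multihomogeneous (\<Sum>i=1..n. A i) (op_eval fmul p X)"
  unfolding op_eval_def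
proof (intro multihomogeneous_sum multihomogeneous_sc)
  fix ts assume "ts \<in> Poly_Mapping.keys p"
  then have n: "nleaves (fst ts) = n" and perm: "inv (snd ts) permutes {1..n}"
    using assms(1) by (auto simp: Mag_def mag_basis_def permutes_inv)
  have "list_all2 multihomogeneous (map (\<lambda>j. A (inv (snd ts) j)) [1..<n + 1])
                                    (map (\<lambda>j. X (inv (snd ts) j)) [1..<n + 1])"
    using assms(2) permutes_in_image[OF perm]
    by (simp add: list_all2_conv_all_nth del: upt_Suc)
  then have "multihomogeneous (sum_list (map (\<lambda>j. A (inv (snd ts) j)) [1..<n + 1]))
               (eval_tree fmul (fst ts) (map (\<lambda>j. X (inv (snd ts) j)) [1..<n + 1]))"
    by (intro multihomogeneous_eval_tree) (simp_all add: n)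
  then show "multihomogeneous (\<Sum>i=1..n. A i)
               (eval_tree fmul (fst ts) (map (\<lambda>j. X (inv (snd ts) j)) [1..<nleaves (fst ts) + 1]))"
    by (simp only: n sum_list_map_permutes[OF perm])
qed

lemma sum_mset_singletons_shift: "(\<Sum>j=1..m. {#s + j#}) = mset_set {s + 1..s + (m::nat)}"
proof (induction m)
  case (Suc m)
  have "{s + 1..s + Suc m} = insert (s + Suc m) {s + 1..s + m}"
    by auto
  then show ?case
    using Suc by simp
qed simp

lemma sum_mset_set_blocks:
  fixes m :: "nat \<Rightarrow> nat"
  shows "(\<Sum>i=1..n. mset_set {sum m {1..<i} + 1..sum m {1..<i} + m i}) = mset_set {1..sum m {1..n}}"
proof (induction n)
  case (Suc n)
  have "{1..sum m {1..Suc n}} = {1..sum m {1..n}} \<union> {sum m {1..n} + 1..sum m {1..n} + m (Suc n)}"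
    by auto
  then have "mset_set {1..sum m {1..Suc n}}
      = mset_set {1..sum m {1..n}} + mset_set {sum m {1..n} + 1..sum m {1..n} + m (Suc n)}"
    by (simp add: mset_set_Union)
  then show ?case
    using Suc by (simp add: atLeastLessThanSuc_atLeastAtMost)
qed simp

lemma mset_eq_mset_set_atLeastAtMostD:
  assumes "mset l = mset_set {1..M}"
  shows "distinct l" and "set l = {1..M}" and "length l = M"
proof -
  have l: "mset l = mset [1..<M + 1]"
    unfolding assms mset_upt by (rule arg_cong[where f=mset_set]) auto
  show "distinct l"
    using mset_eq_imp_distinct_iff[OF l] by simp
  show "set l = {1..M}"
    using mset_eq_setD[OF l] by auto
  show "length l = M"
    using mset_eq_length[OF l] by simp
qed

lemma permutes_nth_shift:
  assumes "distinct l" and "set l = {1..length l}"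
  shows "(\<lambda>j. if j \<in> {1..length l} then l ! (j - 1) else j) permutes {1..length l}"
    (is "?f permutes ?A")
proof (rule bij_imp_permutes)
  have inj: "inj_on ?f ?A"
    using assms(1) by (auto simp: inj_on_def nth_eq_iff_index_eq)
  moreover have "?f ` ?A \<subseteq> ?A"
  proof
    fix y assume "y \<in> ?f ` ?A"
    then obtain j where "j \<in> ?A" and "y = l ! (j - 1)"
      by auto
    then have "y \<in> set l"
      by auto
    then show "y \<in> ?A"
      using assms(2) by simp
  qed
  ultimately have "?f ` ?A = ?A"
    by (intro endo_inj_surj) simp_all
  with inj show "bij_betw ?f ?A ?A"
    unfolding bij_betw_def by blast
qed auto

lemma map_nth_shift: "map (\<lambda>j. if j \<in> {1..length l} then l ! (j - 1) else j) [1..<length l + 1] = l"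
  by (rule nth_equalityI) (simp_all del: upt_Suc)

lemma nleaves_shape: "nleaves (shape u) = length (leaves u)"
  by (induction u) auto

lemma eval_tree_shape: "eval_tree fmul (shape u) (map fgen (leaves u)) = bv (Some u)"
  by (induction u) (auto simp: nleaves_shape fgen_def)

lemma op_of_word_multilinear:
  assumes "mset (leaves u) = mset_set {1..M}"
  shows "op_of_word u \<in> mag_basis M" and "op_eval fmul (bv (op_of_word u)) fgen = bv (Some u)"
proof -
  let ?l = "leaves u"
  define f where "f = (\<lambda>j. if j \<in> {1..length ?l} then ?l ! (j - 1) else j)"
  have l: "distinct ?l" "set ?l = {1..M}" "length ?l = M"
    using mset_eq_mset_set_atLeastAtMostD[OF assms] by auto
  have perm: "f permutes {1..M}"
    using permutes_nth_shift[of ?l] l unfolding f_def by simp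
  have op: "op_of_word u = (shape u, inv f)"
    by (simp add: op_of_word_def f_def)
  show "op_of_word u \<in> mag_basis M"
    using perm by (simp add: op mag_basis_def nleaves_shape l permutes_inv)
  have "map f [1..<M + 1] = ?l"
    using map_nth_shift[of ?l] unfolding f_def l(3) .
  then have letters: "map (\<lambda>j. fgen (f j)) [1..<M + 1] = map fgen ?l"
    unfolding map_map[of fgen f, unfolded comp_def, symmetric] by (rule arg_cong)
  have "op_eval fmul (bv (op_of_word u)) fgen = eval_tree fmul (shape u) (map (\<lambda>j. fgen (f j)) [1..<M + 1])"
    by (simp add: op_eval_eq_lin_ext op inv_inv_eq[OF permutes_bij[OF perm]] nleaves_shape l(3) del: upt_Suc)
  also have "\<dots> = bv (Some u)"
    unfolding letters by (rule eval_tree_shape)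
  finally show "op_eval fmul (bv (op_of_word u)) fgen = bv (Some u)" .
qed

lemma to_op_eq_lin_ext:
  "to_op C = lin_ext (\<lambda>w. case w of None \<Rightarrow> 0 | Some u \<Rightarrow> bv (op_of_word u)) C"
  unfolding to_op_def lin_ext_def
  by (rule sum.cong) (auto split: option.split simp: single_eq_sc_bv)

lemma to_op_in_Mag:
  fixes C :: "nat bt option \<Rightarrow>\<^sub>0 'k::field"
  assumes "multihomogeneous (mset_set {1..M}) C"
  shows "to_op C \<in> Mag M"
  unfolding Mag_def mem_Collect_eq
proof
  let ?g = "\<lambda>w. case w of None \<Rightarrow> 0 | Some u \<Rightarrow> (bv (op_of_word u) :: _ \<Rightarrow>\<^sub>0 'k)"
  fix k assume "k \<in> Poly_Mapping.keys (to_op C)"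
  then have "k \<in> (\<Union>w\<in>Poly_Mapping.keys C. Poly_Mapping.keys (?g w))"
    unfolding to_op_eq_lin_ext by (rule subsetD[OF keys_lin_ext_subset])
  then obtain w where w: "w \<in> Poly_Mapping.keys C" and k: "k \<in> Poly_Mapping.keys (?g w)"
    by (rule UN_E)
  from w assms obtain u where "w = Some u" and u: "mset (leaves u) = mset_set {1..M}"
    unfolding multihomogeneous_def by blast
  with k have "k = op_of_word u"
    by (simp add: bv_def)
  then show "k \<in> mag_basis M"
    using op_of_word_multilinear(1)[OF u] by simp
qed

lemma op_eval_to_op:
  assumes "multihomogeneous (mset_set {1..M}) C"
  shows "op_eval fmul (to_op C) fgen = C"
proof -
  have "op_eval fmul (to_op C) fgen
      = lin_ext (\<lambda>w. op_eval fmul (case w of None \<Rightarrow> 0 | Some u \<Rightarrow> bv (op_of_word u)) fgen) C"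
    unfolding to_op_eq_lin_ext op_eval_eq_lin_ext lin_ext_lin_ext ..
  also have "\<dots> = lin_ext bv C"
  proof (rule lin_ext_cong)
    fix w assume "w \<in> Poly_Mapping.keys C"
    then obtain u where "w = Some u" and u: "mset (leaves u) = mset_set {1..M}"
      using assms unfolding multihomogeneous_def by blast
    then show "op_eval fmul (case w of None \<Rightarrow> 0 | Some u \<Rightarrow> bv (op_of_word u)) fgen = bv w"
      by (simp add: op_of_word_multilinear(2)[OF u])
  qed
  finally show ?thesis
    by simp
qed

lemma to_op_PrimMag:
  assumes "multihomogeneous (mset_set {1..M}) C" and "coprimitive fcop fone C"
  shows "to_op C \<in> PrimMag M"
proof -
  have "None \<notin> Poly_Mapping.keys C"
    using assms(1) by (auto simp: multihomogeneous_def)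
  then have "fcounit C = 0"
    by (simp add: fcounit_def in_keys_iff)
  then show ?thesis
    using assms by (simp add: PrimMag_def is_prim_iff to_op_in_Mag op_eval_to_op)
qed

section \<open>The suboperad of primitive operations\<close>

lemma mag_id_PrimMag: "mag_id \<in> PrimMag 1"
proof -
  have "mag_id \<in> Mag 1"
    by (simp add: Mag_def mag_id_def bv_def mag_basis_def permutes_id)
  moreover have eval: "op_eval fmul mag_id fgen = fgen 1"
    by (simp add: op_eval_eq_lin_ext mag_id_def)
  moreover have "is_prim fcop fcounit fone (op_eval fmul mag_id fgen)"
    unfolding eval is_prim_iff
    by (simp add: coprimitive_fgen) (simp add: fcounit_def fgen_def bv_def lookup_single)
  ultimately show ?thesis
    by (simp add: PrimMag_def)
qed

theorem mag_comp_PrimMag: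
  assumes p: "p \<in> PrimMag n" and q: "\<And>i. i \<in> {1..n} \<Longrightarrow> q i \<in> PrimMag (m i)"
  shows "mag_comp p m q \<in> PrimMag (\<Sum>i=1..n. m i)"
proof -
  define Q where "Q i = op_eval fmul (q i) (\<lambda>j. fgen (sum m {1..<i} + j))" for i
  have Q: "coprimitive fcop fone (Q i)
      \<and> multihomogeneous (mset_set {sum m {1..<i} + 1..sum m {1..<i} + m i}) (Q i)"
    if "i \<in> {1..n}" for i
  proof
    from q[OF that] have qM: "q i \<in> Mag (m i)" and "coprimitive fcop fone (op_eval fmul (q i) fgen)"
      by (simp_all add: PrimMag_def is_prim_iff)
    then show "coprimitive fcop fone (Q i)"
      unfolding Q_def by (rule free.coprimitive_op_eval) (rule coprimitive_fgen)
    have "multihomogeneous (\<Sum>j=1..m i. {#sum m {1..<i} + j#}) (Q i)"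
      unfolding Q_def by (rule multihomogeneous_op_eval[OF qM]) (rule multihomogeneous_fgen)
    then show "multihomogeneous (mset_set {sum m {1..<i} + 1..sum m {1..<i} + m i}) (Q i)"
      by (simp only: sum_mset_singletons_shift)
  qed
  from p have pM: "p \<in> Mag n" and "coprimitive fcop fone (op_eval fmul p fgen)"
    by (simp_all add: PrimMag_def is_prim_iff)
  then have "coprimitive fcop fone (op_eval fmul p Q)"
    by (rule free.coprimitive_op_eval) (use Q in blast)
  moreover have "multihomogeneous (\<Sum>i=1..n. mset_set {sum m {1..<i} + 1..sum m {1..<i} + m i})
                   (op_eval fmul p Q)"
    by (rule multihomogeneous_op_eval[OF pM]) (use Q in blast)
  then have "multihomogeneous (mset_set {1..sum m {1..n}}) (op_eval fmul p Q)"
    by (simp only: sum_mset_set_blocks)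
  ultimately have "to_op (op_eval fmul p Q) \<in> PrimMag (\<Sum>i=1..n. m i)"
    by (intro to_op_PrimMag)
  then show ?thesis
    unfolding mag_comp_def Q_def .
qed

section \<open>Primitive elements of an As^c-Mag-bialgebra\<close>

lemma counit_tensor_left:
  assumes "is_linear_form e"
  shows "lin_ext (\<lambda>ab. sc (e (bv (fst ab))) (bv (snd ab))) (tensor A B) = sc (e A) B"
proof (rule bilinear_eq_on_basis
    [where f="\<lambda>A B. lin_ext (\<lambda>ab. sc (e (bv (fst ab))) (bv (snd ab))) (tensor A B)"
       and g="\<lambda>A B. sc (e A) B"])
  show "is_linear (\<lambda>A. sc (e A) B)" for B
    using assms by (simp add: is_linear_def is_linear_form_def sc_add_left)
  show "is_linear (sc (e A))" for A
    by (simp add: is_linear_def mult.commute)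
qed (auto intro!: is_linear_compose[OF is_linear_lin_ext is_linear_tensor_left]
                  is_linear_compose[OF is_linear_lin_ext is_linear_tensor_right])

lemma unit_nonzero:
  assumes "is_bilinear mu" and "\<And>x. mu one x = x"
  shows "one \<noteq> 0"
proof
  assume "one = 0"
  then have "bv b = mu 0 (bv b)" for b
    using assms(2) by simp
  then show False
    using is_linear_0[OF is_bilinear_left[OF assms(1)]] by simp
qed

lemma counit_coprimitive:
  assumes H: "asc_mag_bialgebra mu one D e" and y: "coprimitive D one y"
  shows "e y = 0"
proof -
  let ?counit_left = "lin_ext (\<lambda>ab. sc (e (bv (fst ab))) (bv (snd ab)))"
  have e: "is_linear_form e" and counit: "\<And>x. ?counit_left (D x) = x"
    and one: "one \<noteq> 0" and "D one = tensor one one"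
    using H unit_nonzero by (auto simp: asc_mag_bialgebra_def counital_def)
  then have "sc (e one) one = one"
    using counit[of one] by (simp add: counit_tensor_left)
  then have "e one = 1"
    using one by (rule sc_eq_self_imp)
  have "y = ?counit_left (D y)"
    by (simp add: counit)
  also have "\<dots> = sc (e y) one + y"
    using y \<open>e one = 1\<close> by (simp add: coprimitive_def counit_tensor_left[OF e])
  finally have "sc (e y) one = 0"
    by simp
  then show ?thesis
    using one by (rule sc_eq_0_imp)
qed

theorem is_prim_op_eval:
  assumes H: "asc_mag_bialgebra mu one D e" and "p \<in> PrimMag n"
    and "\<And>i. i \<in> {1..n} \<Longrightarrow> is_prim D e one (x i)"
  shows "is_prim D e one (op_eval mu p x)"
proof -
  interpret compatible_coproduct mu one D
    using H by unfold_locales (auto simp: asc_mag_bialgebra_def)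
  have "coprimitive D one (op_eval mu p x)"
    using assms(2,3) by (intro coprimitive_op_eval) (auto simp: PrimMag_def is_prim_iff)
  then show ?thesis
    using counit_coprimitive[OF H] by (simp add: is_prim_iff)
qed

theorem corollary1p4:
  fixes dummy_k :: "'k::field" and dummy_b :: "'b"
  shows "(mag_id \<in> (PrimMag 1 :: ((tree \<times> (nat \<Rightarrow> nat)) \<Rightarrow>\<^sub>0 'k) set) \<and>
          (\<forall>n (p :: (tree \<times> (nat \<Rightarrow> nat)) \<Rightarrow>\<^sub>0 'k) m q.
             n \<ge> 1 \<longrightarrow> p \<in> PrimMag n \<longrightarrow>
             (\<forall>i\<in>{1..n}. m i \<ge> 1 \<and> q i \<in> PrimMag (m i)) \<longrightarrow>
             mag_comp p m q \<in> PrimMag (\<Sum>i=1..n. m i)))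
       \<and> (\<forall>(mu :: ('b \<Rightarrow>\<^sub>0 'k) \<Rightarrow> ('b \<Rightarrow>\<^sub>0 'k) \<Rightarrow> ('b \<Rightarrow>\<^sub>0 'k)) one D e n
             (p :: (tree \<times> (nat \<Rightarrow> nat)) \<Rightarrow>\<^sub>0 'k) x.
             asc_mag_bialgebra mu one D e \<longrightarrow> n \<ge> 1 \<longrightarrow> p \<in> PrimMag n \<longrightarrow>
             (\<forall>i\<in>{1..n}. is_prim D e one (x i)) \<longrightarrow>
             is_prim D e one (op_eval mu p x))"
  using mag_id_PrimMag mag_comp_PrimMag is_prim_op_eval by blast

end
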